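(* Let $b>0$, $d\in\mathbb{N}^*$, and let $(G_n)_{n\ge0}$, $G_n=(V_n,E_n)$, be a $(b,d)$-expander. Let $\alpha\in\,]0,1/2[$ and $c\in\,]0,1[$. There is a positive constant $C'$, depending only on $\alpha$, $c$, $b$ and $d$, such that for $|V_n|$ large enough and for every $p\in[p_{n,\alpha}(c),p_{n,1-\alpha}(c)]$, \[ \frac{d\,\mathbb{E}_p(L_n^{(1)})}{dp}\geq C'|V_n|. \]
   Context: For a finite graph $G=(V,E)$, $E(A,B)$ is the set of edges with one endpoint in $A$ and the other in $B$, and the Cheeger constant is $c(G)=\min_{A\subset V,\,0<|A|\le |V|/2} |E(A,A^c)|/|A|$. A $(b,d)$-expander is a sequence of finite graphs $G_n=(V_n,E_n)$ such that for every $n$ the maximal degree of $G_n$ is at most $d$ and $c(G_n)>b$, with $|V_n|\to\infty$. Configurations $x\in\{0,1\}^{E_n}$ are identified with the spanning subgraph of $G_n$ keeping exactly the edges $e$ with $x(e)=1$; $\mu_{n,p}$ is the product measure on $\{0,1\}^{E_n}$ under which each $x(e)$ is independently $1$ with probability $p$ and $0$ otherwise, and $\mathbb{E}_p$ is its expectation. $L_n^{(1)}(x)$ is the number of vertices of the largest connected component of $x$. For $c\in]0,1[$ and $\alpha\in[0,1]$, $p_{n,\alpha}(c)$ is the unique $p\in[0,1]$ such that $\mu_{n,p}(L_n^{(1)}\ge c|V_n|)=\alpha$. *)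

theory Defs
  imports "HOL-Analysis.Analysis"
begin

definition graph :: "'a set \<Rightarrow> 'a set set \<Rightarrow> bool" where
  "graph V E \<longleftrightarrow> finite V \<and> (\<forall>e\<in>E. e \<subseteq> V \<and> card e = 2)"

definition degree :: "'a set set \<Rightarrow> 'a \<Rightarrow> nat" where
  "degree E v = card {e\<in>E. v \<in> e}"

definition max_degree :: "'a set \<Rightarrow> 'a set set \<Rightarrow> nat" where
  "max_degree V E = Max (insert 0 (degree E ` V))"

definition edges_between :: "'a set set \<Rightarrow> 'a set \<Rightarrow> 'a set \<Rightarrow> 'a set set" where
  "edges_between E A B = {e\<in>E. \<exists>x\<in>A. \<exists>y\<in>B. e = {x, y}}"

definition cheeger :: "'a set \<Rightarrow> 'a set set \<Rightarrow> real" where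
  "cheeger V E = Min {real (card (edges_between E A (V - A))) / real (card A) | A.
       A \<subseteq> V \<and> 0 < card A \<and> real (card A) \<le> real (card V) / 2}"

definition expander :: "real \<Rightarrow> nat \<Rightarrow> (nat \<Rightarrow> 'a set) \<Rightarrow> (nat \<Rightarrow> 'a set set) \<Rightarrow> bool" where
  "expander b d V E \<longleftrightarrow>
     (\<forall>n. graph (V n) (E n) \<and> max_degree (V n) (E n) \<le> d \<and> cheeger (V n) (E n) > b)
     \<and> filterlim (\<lambda>n. card (V n)) at_top sequentially"

text \<open>A configuration is identified with the set F of open edges (F \<subseteq> E).\<close>
definition connected_in :: "'a set set \<Rightarrow> 'a \<Rightarrow> 'a \<Rightarrow> bool" where
  "connected_in F = (\<lambda>u v. {u, v} \<in> F)\<^sup>*\<^sup>*"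

definition component :: "'a set \<Rightarrow> 'a set set \<Rightarrow> 'a \<Rightarrow> 'a set" where
  "component V F v = {w\<in>V. connected_in F v w}"

definition largest_comp :: "'a set \<Rightarrow> 'a set set \<Rightarrow> nat" where
  "largest_comp V F = Max (insert 0 ((\<lambda>v. card (component V F v)) ` V))"

definition perc_weight :: "'a set set \<Rightarrow> real \<Rightarrow> 'a set set \<Rightarrow> real" where
  "perc_weight E p F = p ^ card F * (1 - p) ^ (card E - card F)"

definition perc_prob :: "'a set set \<Rightarrow> real \<Rightarrow> ('a set set \<Rightarrow> bool) \<Rightarrow> real" where
  "perc_prob E p P = (\<Sum>F\<in>Pow E. if P F then perc_weight E p F else 0)"

definition perc_expect :: "'a set set \<Rightarrow> real \<Rightarrow> ('a set set \<Rightarrow> real) \<Rightarrow> real" where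
  "perc_expect E p f = (\<Sum>F\<in>Pow E. f F * perc_weight E p F)"

text \<open>p_{n,\<alpha>}(c): the unique p in [0,1] with mu_{n,p}(L \<ge> c|V|) = \<alpha>.\<close>
definition p_crit :: "'a set \<Rightarrow> 'a set set \<Rightarrow> real \<Rightarrow> real \<Rightarrow> real" where
  "p_crit V E \<alpha> c = (THE p. 0 \<le> p \<and> p \<le> 1 \<and>
      perc_prob E p (\<lambda>F. real (largest_comp V F) \<ge> c * real (card V)) = \<alpha>)"

end

theory Submission
  imports Defs
begin

text \<open>By Russo's formula the derivative of E_p(L) is the expected total influence of the edges on L.
  Every closed edge leaving a largest cluster C is pivotal, and the Cheeger bound provides more than
  b min(|C|, N - |C|) of them, so the derivative is at least b E_p(min(L, N - L)).
  In the critical window the giant event L \<ge> cN has probability between \<alpha> and 1 - \<alpha>.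
  A union bound over balanced edge cuts shows that p stays below 1 - \<eta> for a fixed \<eta> > 0, so with
  bounded degree the number of isolated vertices has mean at least \<eta>^d N and, by Chebyshev (isolation
  events of vertices without a common edge are independent), exceeds \<eta>^d N / 2 with probability at
  least 1 - \<alpha>/2. Isolated vertices lie outside the giant cluster, hence with probability at least
  \<alpha>/2 both L and N - L are of order N.\<close>

section \<open>Bernoulli bond percolation on a finite edge set\<close>

lemma perc_weight_nonneg: "0 \<le> p \<Longrightarrow> p \<le> 1 \<Longrightarrow> 0 \<le> perc_weight E p F"
  unfolding perc_weight_def by simp

lemma perc_weight_pos: "0 < p \<Longrightarrow> p < 1 \<Longrightarrow> 0 < perc_weight E p F"
  unfolding perc_weight_def by simp

lemma perc_weight_insert_notin:
  assumes "finite E" "e \<notin> E" "F \<subseteq> E"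
  shows "perc_weight (insert e E) p F = (1 - p) * perc_weight E p F"
proof -
  have "card F \<le> card E" using assms by (simp add: card_mono)
  then have "card (insert e E) - card F = Suc (card E - card F)" using assms by simp
  then show ?thesis unfolding perc_weight_def by simp
qed

lemma perc_weight_insert_in:
  assumes "finite E" "e \<notin> E" "F \<subseteq> E"
  shows "perc_weight (insert e E) p (insert e F) = p * perc_weight E p F"
proof -
  have "finite F" "e \<notin> F" using assms finite_subset by blast+
  then show ?thesis unfolding perc_weight_def using assms by simp
qed

lemma perc_expect_insert:
  assumes "finite E" "e \<notin> E"
  shows "perc_expect (insert e E) p f
           = p * perc_expect E p (\<lambda>F. f (insert e F)) + (1 - p) * perc_expect E p f"
proof -
  have disj: "Pow E \<inter> insert e ` Pow E = {}" using assms(2) by blast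
  have inj: "inj_on (insert e) (Pow E)"
    unfolding inj_on_def using assms(2) by (metis PowD in_mono insert_ident)
  have split: "perc_expect (insert e E) p f = (\<Sum>F\<in>Pow E. f F * perc_weight (insert e E) p F)
        + (\<Sum>F\<in>insert e ` Pow E. f F * perc_weight (insert e E) p F)"
    unfolding perc_expect_def Pow_insert using disj assms(1) by (simp add: sum.union_disjoint)
  have "(\<Sum>F\<in>insert e ` Pow E. f F * perc_weight (insert e E) p F)
        = (\<Sum>F\<in>Pow E. f (insert e F) * perc_weight (insert e E) p (insert e F))"
    using inj by (rule sum.reindex_cong) auto
  also have "\<dots> = p * perc_expect E p (\<lambda>F. f (insert e F))"
    unfolding perc_expect_def sum_distrib_left
    by (intro sum.cong) (auto simp: perc_weight_insert_in[OF assms])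
  finally have with_e: "(\<Sum>F\<in>insert e ` Pow E. f F * perc_weight (insert e E) p F)
      = p * perc_expect E p (\<lambda>F. f (insert e F))" .
  have without_e: "(\<Sum>F\<in>Pow E. f F * perc_weight (insert e E) p F) = (1 - p) * perc_expect E p f"
    unfolding perc_expect_def sum_distrib_left
    by (intro sum.cong) (auto simp: perc_weight_insert_notin[OF assms])
  show ?thesis unfolding split with_e without_e by simp
qed

lemma perc_expect_empty: "perc_expect {} p f = f {}"
  unfolding perc_expect_def perc_weight_def by simp

lemma perc_expect_cong:
  "(\<And>F. F \<subseteq> E \<Longrightarrow> f F = g F) \<Longrightarrow> perc_expect E p f = perc_expect E p g"
  unfolding perc_expect_def by (intro sum.cong) auto

lemma perc_expect_add: "perc_expect E p (\<lambda>F. f F + g F) = perc_expect E p f + perc_expect E p g"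
  unfolding perc_expect_def by (simp add: algebra_simps sum.distrib)

lemma perc_expect_diff: "perc_expect E p (\<lambda>F. f F - g F) = perc_expect E p f - perc_expect E p g"
  unfolding perc_expect_def by (simp add: algebra_simps sum_subtractf)

lemma perc_expect_cmult: "perc_expect E p (\<lambda>F. a * f F) = a * perc_expect E p f"
  unfolding perc_expect_def by (simp add: sum_distrib_left algebra_simps)

lemma perc_expect_sum:
  "perc_expect E p (\<lambda>F. \<Sum>i\<in>I. f i F) = (\<Sum>i\<in>I. perc_expect E p (f i))"
  unfolding perc_expect_def sum_distrib_right by (rule sum.swap)

lemma perc_expect_const: "finite E \<Longrightarrow> perc_expect E p (\<lambda>_. a) = a"
  by (induction E rule: finite_induct) (simp_all add: perc_expect_empty perc_expect_insert algebra_simps)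

lemma perc_expect_at_0: "finite E \<Longrightarrow> perc_expect E 0 f = f {}"
  by (induction E arbitrary: f rule: finite_induct) (simp_all add: perc_expect_empty perc_expect_insert)

lemma perc_expect_at_1: "finite E \<Longrightarrow> perc_expect E 1 f = f E"
  by (induction E arbitrary: f rule: finite_induct) (simp_all add: perc_expect_empty perc_expect_insert)

lemma perc_expect_mono:
  assumes "0 \<le> p" "p \<le> 1" "\<And>F. F \<subseteq> E \<Longrightarrow> f F \<le> g F"
  shows "perc_expect E p f \<le> perc_expect E p g"
  unfolding perc_expect_def
  by (rule sum_mono) (use assms perc_weight_nonneg in \<open>auto intro!: mult_right_mono\<close>)

lemma perc_expect_nonneg:
  "0 \<le> p \<Longrightarrow> p \<le> 1 \<Longrightarrow> (\<And>F. F \<subseteq> E \<Longrightarrow> 0 \<le> f F) \<Longrightarrow> 0 \<le> perc_expect E p f"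
  using perc_expect_mono[of p E "\<lambda>_. 0" f] by (simp add: perc_expect_def)

lemma perc_expect_ge_summand:
  assumes "finite E" "0 \<le> p" "p \<le> 1" "F0 \<subseteq> E" "\<And>F. F \<subseteq> E \<Longrightarrow> 0 \<le> f F"
  shows "f F0 * perc_weight E p F0 \<le> perc_expect E p f"
  unfolding perc_expect_def
proof (rule member_le_sum)
  fix F assume "F \<in> Pow E - {F0}"
  then show "0 \<le> f F * perc_weight E p F" using assms perc_weight_nonneg[of p E F] by simp
qed (use assms in auto)

lemma perc_prob_eq_expect: "perc_prob E p P = perc_expect E p (\<lambda>F. of_bool (P F))"
  unfolding perc_prob_def perc_expect_def by (intro sum.cong) auto

lemma perc_prob_not:
  assumes "finite E" shows "perc_prob E p (\<lambda>F. \<not> P F) = 1 - perc_prob E p P"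
proof -
  have "perc_prob E p (\<lambda>F. \<not> P F) = perc_expect E p (\<lambda>F. 1 - of_bool (P F))"
    unfolding perc_prob_eq_expect by (rule perc_expect_cong) simp
  then show ?thesis unfolding perc_expect_diff perc_expect_const[OF assms] perc_prob_eq_expect .
qed

lemma perc_prob_mono_event:
  assumes "0 \<le> p" "p \<le> 1" "\<And>F. F \<subseteq> E \<Longrightarrow> P F \<Longrightarrow> Q F"
  shows "perc_prob E p P \<le> perc_prob E p Q"
  unfolding perc_prob_eq_expect by (rule perc_expect_mono) (use assms in auto)

lemma perc_prob_union_bound:
  assumes "0 \<le> p" "p \<le> 1" "finite I" "\<And>F. F \<subseteq> E \<Longrightarrow> P F \<Longrightarrow> \<exists>i\<in>I. Q i F"
  shows "perc_prob E p P \<le> (\<Sum>i\<in>I. perc_prob E p (Q i))"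
  unfolding perc_prob_eq_expect perc_expect_sum[symmetric]
proof (rule perc_expect_mono[OF assms(1,2)])
  fix F assume "F \<subseteq> E"
  show "of_bool (P F) \<le> (\<Sum>i\<in>I. of_bool (Q i F) :: real)"
  proof (cases "P F")
    case True
    then obtain i where "i \<in> I" "Q i F" using assms(4)[OF \<open>F \<subseteq> E\<close>] by blast
    then have "of_bool (Q i F) \<le> (\<Sum>i\<in>I. of_bool (Q i F) :: real)"
      by (intro member_le_sum) (use assms(3) in auto)
    then show ?thesis using True \<open>Q i F\<close> by simp
  qed (simp add: sum_nonneg)
qed

lemma perc_prob_avoid:
  assumes "finite E" "B \<subseteq> E"
  shows "perc_prob E p (\<lambda>F. F \<inter> B = {}) = (1 - p) ^ card B"
  using assms
proof (induction E arbitrary: B rule: finite_induct)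
  case empty then show ?case by (simp add: perc_prob_eq_expect perc_expect_empty)
next
  case (insert e E)
  show ?case
  proof (cases "e \<in> B")
    case True
    have "perc_prob E p (\<lambda>F. F \<inter> B = {}) = perc_prob E p (\<lambda>F. F \<inter> (B - {e}) = {})"
      unfolding perc_prob_eq_expect
    proof (rule perc_expect_cong)
      fix F assume "F \<subseteq> E"
      then have "F \<inter> B = F \<inter> (B - {e})" using insert.hyps(2) by blast
      then show "of_bool (F \<inter> B = {}) = (of_bool (F \<inter> (B - {e}) = {}) :: real)" by simp
    qed
    moreover have "card B = Suc (card (B - {e}))"
      using True insert.prems insert.hyps(1) by (metis card_Suc_Diff1 finite_insert finite_subset)
    moreover have "B - {e} \<subseteq> E" using insert.prems by blast
    moreover have "perc_prob (insert e E) p (\<lambda>F. F \<inter> B = {}) = (1 - p) * perc_prob E p (\<lambda>F. F \<inter> B = {})"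
      unfolding perc_prob_eq_expect perc_expect_insert[OF insert.hyps]
      using True by (simp add: perc_expect_def Int_insert_left)
    ultimately show ?thesis using insert.IH[of "B - {e}"] by simp
  next
    case False
    then have "B \<subseteq> E" using insert.prems by blast
    then show ?thesis using False insert.hyps insert.IH[of B]
      by (simp add: perc_prob_eq_expect perc_expect_insert algebra_simps)
  qed
qed

lemma perc_expect_ge_prob_diff:
  assumes "0 \<le> p" "p \<le> 1" "0 \<le> M" "\<And>F. F \<subseteq> E \<Longrightarrow> 0 \<le> f F"
    and "\<And>F. F \<subseteq> E \<Longrightarrow> A F \<Longrightarrow> \<not> B F \<Longrightarrow> M \<le> f F"
  shows "M * (perc_prob E p A - perc_prob E p B) \<le> perc_expect E p f"
proof -
  have "M * (perc_prob E p A - perc_prob E p B) = perc_expect E p (\<lambda>F. M * (of_bool (A F) - of_bool (B F)))"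
    unfolding perc_prob_eq_expect perc_expect_cmult perc_expect_diff ..
  also have "\<dots> \<le> perc_expect E p f"
  proof (rule perc_expect_mono[OF assms(1,2)])
    fix F assume "F \<subseteq> E"
    show "M * (of_bool (A F) - of_bool (B F)) \<le> f F"
      using assms(3) assms(4,5)[OF \<open>F \<subseteq> E\<close>] by (cases "A F"; cases "B F") auto
  qed
  finally show ?thesis .
qed

lemma chebyshev_lower_tail:
  assumes "finite E" "0 \<le> p" "p \<le> 1" "0 < perc_expect E p X"
  defines "\<mu> \<equiv> perc_expect E p X"
  shows "(\<mu> / 2)\<^sup>2 * perc_prob E p (\<lambda>F. X F < \<mu> / 2) \<le> perc_expect E p (\<lambda>F. (X F)\<^sup>2) - \<mu>\<^sup>2"
proof -
  have "(\<mu> / 2)\<^sup>2 * perc_prob E p (\<lambda>F. X F < \<mu> / 2)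
      = perc_expect E p (\<lambda>F. (\<mu> / 2)\<^sup>2 * of_bool (X F < \<mu> / 2))"
    unfolding perc_prob_eq_expect perc_expect_cmult ..
  also have "\<dots> \<le> perc_expect E p (\<lambda>F. (X F - \<mu>)\<^sup>2)"
  proof (rule perc_expect_mono[OF assms(2,3)])
    fix F
    show "(\<mu> / 2)\<^sup>2 * of_bool (X F < \<mu> / 2) \<le> (X F - \<mu>)\<^sup>2"
    proof (cases "X F < \<mu> / 2")
      case True
      then have "(\<mu> / 2)\<^sup>2 \<le> (\<mu> - X F)\<^sup>2" using assms(4) unfolding \<mu>_def by (intro power_mono) auto
      then show ?thesis using True by (simp add: power2_commute)
    qed simp
  qed
  also have "perc_expect E p (\<lambda>F. (X F - \<mu>)\<^sup>2) = perc_expect E p (\<lambda>F. (X F)\<^sup>2 + ((-2 * \<mu>) * X F + \<mu>\<^sup>2))"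
    by (rule perc_expect_cong) (simp add: power2_diff algebra_simps)
  also have "\<dots> = perc_expect E p (\<lambda>F. (X F)\<^sup>2) - \<mu>\<^sup>2"
    unfolding perc_expect_add perc_expect_cmult perc_expect_const[OF assms(1)] \<mu>_def[symmetric]
    by (simp add: power2_eq_square)
  finally show ?thesis .
qed

section \<open>Russo's formula and increasing events\<close>

definition influence_sum :: "'a set \<Rightarrow> ('a set \<Rightarrow> real) \<Rightarrow> 'a set \<Rightarrow> real" where
  "influence_sum E f F = (\<Sum>e\<in>E. f (insert e F) - f (F - {e}))"

lemma influence_sum_insert:
  assumes "finite E" "e \<notin> E" "F \<subseteq> E"
  shows "influence_sum (insert e E) f F = f (insert e F) - f F + influence_sum E f F"
    and "influence_sum (insert e E) f (insert e F)
           = f (insert e F) - f F + influence_sum E (\<lambda>F. f (insert e F)) F"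
proof -
  have "e \<notin> F" using assms(2,3) by blast
  then show "influence_sum (insert e E) f F = f (insert e F) - f F + influence_sum E f F"
    using assms(1,2) unfolding influence_sum_def by simp
  have "influence_sum E (\<lambda>F. f (insert e F)) F
      = (\<Sum>e'\<in>E. f (insert e' (insert e F)) - f (insert e F - {e'}))"
    unfolding influence_sum_def
    by (rule sum.cong) (use assms(2) in \<open>auto simp: insert_commute insert_Diff_if\<close>)
  then show "influence_sum (insert e E) f (insert e F)
      = f (insert e F) - f F + influence_sum E (\<lambda>F. f (insert e F)) F"
    using assms(1,2) \<open>e \<notin> F\<close> unfolding influence_sum_def by simp
qed

text \<open>Russo's formula, by induction on the edge set: conditioning on the state of a new edge e writes
  the expectation as q A(q) + (1 - q) B(q), and the product rule produces the influence of e.\<close>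
lemma russo_formula:
  assumes "finite E"
  shows "((\<lambda>q. perc_expect E q f) has_real_derivative perc_expect E p (influence_sum E f)) (at p)"
  using assms
proof (induction E arbitrary: f rule: finite_induct)
  case empty
  then show ?case by (simp add: perc_expect_empty influence_sum_def)
next
  case (insert e E)
  let ?A = "\<lambda>q. perc_expect E q (\<lambda>F. f (insert e F))" and ?B = "\<lambda>q. perc_expect E q f"
  let ?A' = "perc_expect E p (influence_sum E (\<lambda>F. f (insert e F)))" and ?B' = "perc_expect E p (influence_sum E f)"
  have deriv: "((\<lambda>q. q * ?A q + (1 - q) * ?B q) has_real_derivative
      (?A p + p * ?A') + (- ?B p + (1 - p) * ?B')) (at p)"
    by (auto intro!: derivative_eq_intros insert.IH)
  have fun_eq: "(\<lambda>q. perc_expect (insert e E) q f) = (\<lambda>q. q * ?A q + (1 - q) * ?B q)"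
    using insert.hyps by (simp add: perc_expect_insert)
  have with_e: "perc_expect E p (\<lambda>F. influence_sum (insert e E) f (insert e F)) = ?A p - ?B p + ?A'"
    by (subst perc_expect_cong[OF influence_sum_insert(2)[OF insert.hyps]])
      (simp_all add: perc_expect_add perc_expect_diff)
  have without_e: "perc_expect E p (influence_sum (insert e E) f) = ?A p - ?B p + ?B'"
    by (subst perc_expect_cong[OF influence_sum_insert(1)[OF insert.hyps]])
      (simp_all add: perc_expect_add perc_expect_diff)
  have "perc_expect (insert e E) p (influence_sum (insert e E) f)
      = (?A p + p * ?A') + (- ?B p + (1 - p) * ?B')"
    unfolding perc_expect_insert[OF insert.hyps] with_e without_e by (simp add: algebra_simps)
  then show ?case unfolding fun_eq using deriv by simp
qed

definition increasing_event :: "'a set \<Rightarrow> ('a set \<Rightarrow> bool) \<Rightarrow> bool" where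
  "increasing_event E P \<longleftrightarrow> (\<forall>F G. F \<subseteq> G \<longrightarrow> G \<subseteq> E \<longrightarrow> P F \<longrightarrow> P G)"

lemma increasing_event_pivotal_edge:
  assumes "finite E" "increasing_event E P" "\<not> P {}" "P E"
  obtains F e where "F \<subseteq> E" "e \<in> E" "P (insert e F)" "\<not> P (F - {e})"
proof -
  define k where "k = (LEAST k. \<exists>F\<subseteq>E. P F \<and> card F = k)"
  have "\<exists>F\<subseteq>E. P F \<and> card F = k"
    unfolding k_def by (rule LeastI_ex) (use assms(4) in blast)
  then obtain F where F: "F \<subseteq> E" "P F" "card F = k" by blast
  then obtain e where e: "e \<in> F" using assms(3) by (metis ex_in_conv)
  have "card (F - {e}) < k"
    using card_Diff1_less[OF finite_subset[OF F(1) assms(1)] e] F(3) by simp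
  then have "\<not> P (F - {e})"
    using not_less_Least[of "card (F - {e})" "\<lambda>k. \<exists>F\<subseteq>E. P F \<and> card F = k"] F(1)
    unfolding k_def by blast
  moreover have "insert e F = F" using e by blast
  ultimately show ?thesis using F e by (intro that[of F e]) auto
qed

lemma increasing_event_influence_nonneg:
  assumes "increasing_event E P" "F \<subseteq> E" "e \<in> E"
  shows "0 \<le> of_bool (P (insert e F)) - (of_bool (P (F - {e})) :: real)"
proof -
  have "F - {e} \<subseteq> insert e F" "insert e F \<subseteq> E" using assms(2,3) by auto
  then show ?thesis using assms(1) unfolding increasing_event_def by (cases "P (F - {e})") auto
qed

lemma perc_prob_has_derivative:
  "finite E \<Longrightarrow> ((\<lambda>q. perc_prob E q P) has_real_derivative
     perc_expect E p (influence_sum E (\<lambda>F. of_bool (P F)))) (at p)"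
  unfolding perc_prob_eq_expect by (rule russo_formula)

lemma continuous_on_perc_prob: "finite E \<Longrightarrow> continuous_on S (\<lambda>q. perc_prob E q P)"
  using perc_prob_has_derivative[of E] by (meson DERIV_isCont continuous_at_imp_continuous_on)

lemma influence_sum_indicator_nonneg:
  assumes "increasing_event E P" "F \<subseteq> E"
  shows "0 \<le> influence_sum E (\<lambda>F. of_bool (P F)) F"
  unfolding influence_sum_def
  by (rule sum_nonneg) (rule increasing_event_influence_nonneg[OF assms])

lemma perc_expect_influence_sum_indicator_pos:
  assumes "finite E" "increasing_event E P" "\<not> P {}" "P E" "0 < p" "p < 1"
  shows "0 < perc_expect E p (influence_sum E (\<lambda>F. of_bool (P F)))"
proof -
  obtain F e where F: "F \<subseteq> E" "e \<in> E" "P (insert e F)" "\<not> P (F - {e})"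
    using increasing_event_pivotal_edge[OF assms(1-4)] .
  have "1 \<le> influence_sum E (\<lambda>F. of_bool (P F)) F"
  proof -
    have "of_bool (P (insert e F)) - of_bool (P (F - {e})) \<le> influence_sum E (\<lambda>F. of_bool (P F)) F"
      unfolding influence_sum_def
      by (rule member_le_sum) (use F assms(1) increasing_event_influence_nonneg[OF assms(2) F(1)] in auto)
    then show ?thesis using F by simp
  qed
  then have "0 < influence_sum E (\<lambda>F. of_bool (P F)) F * perc_weight E p F"
    using perc_weight_pos[OF assms(5,6), of E F] by (simp add: zero_less_mult_iff)
  also have "\<dots> \<le> perc_expect E p (influence_sum E (\<lambda>F. of_bool (P F)))"
    using assms F influence_sum_indicator_nonneg by (intro perc_expect_ge_summand) auto
  finally show ?thesis .
qed

lemma perc_prob_mono_increasing: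
  assumes "finite E" "increasing_event E P" "0 \<le> x" "x \<le> y" "y \<le> 1"
  shows "perc_prob E x P \<le> perc_prob E y P"
proof (rule DERIV_nonneg_imp_increasing_open[OF assms(4) _ continuous_on_perc_prob[OF assms(1)]])
  fix t assume "x < t" "t < y"
  then have "0 \<le> perc_expect E t (influence_sum E (\<lambda>F. of_bool (P F)))"
    using assms influence_sum_indicator_nonneg[OF assms(2)] by (intro perc_expect_nonneg) auto
  then show "\<exists>z. ((\<lambda>q. perc_prob E q P) has_real_derivative z) (at t) \<and> 0 \<le> z"
    using perc_prob_has_derivative[OF assms(1)] by blast
qed

lemma perc_prob_strict_mono_increasing:
  assumes "finite E" "increasing_event E P" "\<not> P {}" "P E" "0 \<le> x" "x < y" "y \<le> 1"
  shows "perc_prob E x P < perc_prob E y P"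
proof (rule DERIV_pos_imp_increasing_open[OF assms(6) _ continuous_on_perc_prob[OF assms(1)]])
  fix t assume "x < t" "t < y"
  then have "0 < perc_expect E t (influence_sum E (\<lambda>F. of_bool (P F)))"
    using assms by (intro perc_expect_influence_sum_indicator_pos) auto
  then show "\<exists>z. ((\<lambda>q. perc_prob E q P) has_real_derivative z) (at t) \<and> 0 < z"
    using perc_prob_has_derivative[OF assms(1)] by blast
qed

lemma perc_prob_threshold:
  assumes "finite E" "increasing_event E P" "\<not> P {}" "P E" "0 < a" "a < 1"
  defines "t \<equiv> THE p. 0 \<le> p \<and> p \<le> 1 \<and> perc_prob E p P = a"
  shows "0 \<le> t \<and> t \<le> 1 \<and> perc_prob E t P = a"
  unfolding t_def
proof (rule theI')
  have "perc_prob E 0 P = 0" "perc_prob E 1 P = 1"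
    using assms by (simp_all add: perc_prob_eq_expect perc_expect_at_0 perc_expect_at_1)
  then obtain x where x: "0 \<le> x" "x \<le> 1" "perc_prob E x P = a"
    using IVT'[of "\<lambda>q. perc_prob E q P" 0 a 1, OF _ _ _ continuous_on_perc_prob[OF assms(1)]] assms(5,6)
    by auto
  show "\<exists>!p. 0 \<le> p \<and> p \<le> 1 \<and> perc_prob E p P = a"
  proof (rule ex1I[of _ x])
    fix y assume y: "0 \<le> y \<and> y \<le> 1 \<and> perc_prob E y P = a"
    show "y = x"
      using perc_prob_strict_mono_increasing[OF assms(1-4), of y x]
        perc_prob_strict_mono_increasing[OF assms(1-4), of x y] x y
      by (cases y x rule: linorder_cases) auto
  qed (use x in simp)
qed

section \<open>Clusters\<close>

lemma graph_finite_vertices: "graph V E \<Longrightarrow> finite V"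
  unfolding graph_def by blast

lemma graph_edge_subset: "graph V E \<Longrightarrow> e \<in> E \<Longrightarrow> e \<subseteq> V"
  unfolding graph_def by simp

lemma graph_finite_edges: "graph V E \<Longrightarrow> finite E"
  by (rule finite_subset[of E "Pow V"]) (auto simp: graph_def)

lemma degree_le_max_degree: "graph V E \<Longrightarrow> v \<in> V \<Longrightarrow> degree E v \<le> max_degree V E"
  unfolding max_degree_def using graph_finite_vertices by (intro Max_ge) auto

lemma connected_in_refl: "connected_in F u u"
  unfolding connected_in_def by simp

lemma connected_in_step: "connected_in F u v \<Longrightarrow> {v, w} \<in> F \<Longrightarrow> connected_in F u w"
  unfolding connected_in_def by (rule rtranclp.rtrancl_into_rtrancl)

lemma connected_in_sym: "connected_in F u v \<Longrightarrow> connected_in F v u"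
  unfolding connected_in_def
proof (induction rule: rtranclp_induct)
  case (step y z)
  then have "{z, y} \<in> F" by (simp add: insert_commute)
  then show ?case using step by (meson converse_rtranclp_into_rtranclp)
qed simp

lemma connected_in_mono: "F \<subseteq> G \<Longrightarrow> connected_in F u v \<Longrightarrow> connected_in G u v"
  unfolding connected_in_def by (erule rtranclp_mono[THEN predicate2D, rotated]) blast

lemma connected_in_empty: "connected_in {} u v \<longleftrightarrow> u = v"
  unfolding connected_in_def by (auto elim: rtranclp.cases)

lemma component_subset: "component V F v \<subseteq> V"
  unfolding component_def by blast

lemma finite_component: "graph V E \<Longrightarrow> finite (component V F v)"
  by (rule finite_subset[OF component_subset graph_finite_vertices])

lemma in_component_self: "v \<in> V \<Longrightarrow> v \<in> component V F v"
  unfolding component_def by (simp add: connected_in_refl)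

lemma component_mono: "F \<subseteq> G \<Longrightarrow> component V F v \<subseteq> component V G v"
  unfolding component_def by (auto intro: connected_in_mono)

lemma card_component_pos: "graph V E \<Longrightarrow> v \<in> V \<Longrightarrow> 0 < card (component V F v)"
  using finite_component in_component_self by (metis card_gt_0_iff empty_iff)

lemma card_component_le_largest_comp:
  "graph V E \<Longrightarrow> v \<in> V \<Longrightarrow> card (component V F v) \<le> largest_comp V F"
  unfolding largest_comp_def using graph_finite_vertices by (intro Max_ge) auto

lemma largest_comp_attained:
  assumes "graph V E" "V \<noteq> {}"
  obtains v where "v \<in> V" "card (component V F v) = largest_comp V F"
proof -
  have "largest_comp V F \<in> insert 0 ((\<lambda>v. card (component V F v)) ` V)"
    unfolding largest_comp_def using graph_finite_vertices[OF assms(1)] by (intro Max_in) auto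
  moreover obtain v where "v \<in> V" using assms(2) by blast
  moreover have "0 < largest_comp V F"
    using card_component_pos[OF assms(1) \<open>v \<in> V\<close>, of F]
      card_component_le_largest_comp[OF assms(1) \<open>v \<in> V\<close>, of F] by linarith
  ultimately obtain w where "w \<in> V" "largest_comp V F = card (component V F w)" by auto
  then show ?thesis using that by simp
qed

lemma largest_comp_le_card:
  assumes "graph V E" shows "largest_comp V F \<le> card V"
proof (cases "V = {}")
  case False
  then show ?thesis
    by (metis assms largest_comp_attained card_mono component_subset graph_finite_vertices)
qed (simp add: largest_comp_def)

lemma largest_comp_pos:
  assumes "graph V E" "V \<noteq> {}" shows "0 < largest_comp V F"
proof -
  obtain v where "v \<in> V" "card (component V F v) = largest_comp V F"
    using largest_comp_attained[OF assms] .
  then show ?thesis using card_component_pos[OF assms(1)] by metis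
qed

lemma largest_comp_mono:
  assumes "graph V E" "F \<subseteq> G"
  shows "largest_comp V F \<le> largest_comp V G"
proof (cases "V = {}")
  case False
  then obtain v where "v \<in> V" "card (component V F v) = largest_comp V F"
    using largest_comp_attained[OF assms(1)] by blast
  moreover have "card (component V F v) \<le> card (component V G v)"
    using component_mono[OF assms(2)] finite_component[OF assms(1)] by (rule card_mono[rotated])
  ultimately show ?thesis using card_component_le_largest_comp[OF assms(1) \<open>v \<in> V\<close>, of G] by simp
qed (simp add: largest_comp_def)

lemma largest_comp_empty:
  assumes "graph V E" "V \<noteq> {}"
  shows "largest_comp V {} = 1"
proof -
  have "component V {} v = {v}" if "v \<in> V" for v
    unfolding component_def connected_in_empty using that by auto
  moreover obtain v where "v \<in> V" "card (component V {} v) = largest_comp V {}"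
    using largest_comp_attained[OF assms] .
  ultimately show ?thesis by simp
qed

text \<open>No open edge leaves S; these are the unions of clusters.\<close>
definition edge_closed :: "'a set set \<Rightarrow> 'a set \<Rightarrow> bool" where
  "edge_closed F S \<longleftrightarrow> (\<forall>u w. {u, w} \<in> F \<longrightarrow> u \<in> S \<longrightarrow> w \<in> S)"

lemma edge_closed_connected_in:
  assumes "edge_closed F S" "connected_in F u w" "u \<in> S"
  shows "w \<in> S"
  using assms(2) unfolding connected_in_def
  by (induction rule: rtranclp_induct) (use assms(1,3) in \<open>auto simp: edge_closed_def\<close>)

lemma edge_closed_component:
  assumes "graph V E" "F \<subseteq> E"
  shows "edge_closed F (component V F v)"
  unfolding edge_closed_def
proof (intro allI impI)
  fix u w assume uw: "{u, w} \<in> F" "u \<in> component V F v"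
  have "{u, w} \<subseteq> V" using graph_edge_subset[OF assms(1)] assms(2) uw(1) by blast
  then have "w \<in> V" by simp
  moreover have "connected_in F v w"
    using uw connected_in_step[of F v u w] unfolding component_def by simp
  ultimately show "w \<in> component V F v" unfolding component_def by simp
qed

lemma edge_closed_Diff:
  assumes "graph V E" "F \<subseteq> E" "edge_closed F S"
  shows "edge_closed F (V - S)"
  unfolding edge_closed_def
proof (intro allI impI)
  fix u w assume uw: "{u, w} \<in> F" "u \<in> V - S"
  have "{u, w} \<subseteq> V" using graph_edge_subset[OF assms(1)] assms(2) uw(1) by blast
  then have "w \<in> V" by simp
  moreover have "w \<notin> S"
  proof
    assume "w \<in> S"
    moreover have "{w, u} \<in> F" using uw(1) by (simp add: insert_commute)
    ultimately have "u \<in> S" using assms(3) unfolding edge_closed_def by blast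
    then show False using uw(2) by simp
  qed
  ultimately show "w \<in> V - S" by simp
qed

lemma edge_closed_Un: "edge_closed F A \<Longrightarrow> edge_closed F B \<Longrightarrow> edge_closed F (A \<union> B)"
  unfolding edge_closed_def by blast

lemma edge_closed_disjoint_boundary:
  "edge_closed F S \<Longrightarrow> F \<inter> edges_between E S (V - S) = {}"
  unfolding edge_closed_def edges_between_def by blast

lemma exists_edge_closed_card_between:
  assumes "graph V E" "F \<subseteq> E" "V \<noteq> {}" "t \<le> card V"
  shows "\<exists>S\<subseteq>V. edge_closed F S \<and> t \<le> card S \<and> card S < t + largest_comp V F"
  using assms(4)
proof (induction t)
  case 0
  have "edge_closed F {}" unfolding edge_closed_def by simp
  then show ?case using largest_comp_pos[OF assms(1,3), of F] by (intro exI[of _ "{}"]) simp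
next
  case (Suc t)
  then obtain S where S: "S \<subseteq> V" "edge_closed F S" "t \<le> card S" "card S < t + largest_comp V F"
    by (meson Suc_leD)
  show ?case
  proof (cases "Suc t \<le> card S")
    case True then show ?thesis using S by (intro exI[of _ S]) simp
  next
    case False
    have fin: "finite V" using graph_finite_vertices[OF assms(1)] .
    then have "card S < card V" using False Suc.prems by linarith
    then have "\<not> V \<subseteq> S" using card_mono[OF finite_subset[OF S(1) fin], of V] by linarith
    then obtain v where v: "v \<in> V" "v \<notin> S" by blast
    let ?C = "component V F v"
    have disj: "S \<inter> ?C = {}"
    proof (rule ccontr)
      assume "S \<inter> ?C \<noteq> {}"
      then obtain w where "w \<in> S" "connected_in F v w" unfolding component_def by blast
      then show False using edge_closed_connected_in[OF S(2) connected_in_sym] v(2) by blast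
    qed
    have "card (S \<union> ?C) = card S + card ?C"
      using finite_subset[OF S(1) fin] finite_component[OF assms(1)] disj by (rule card_Un_disjoint)
    moreover have "0 < card ?C" "card ?C \<le> largest_comp V F"
      using card_component_pos[OF assms(1) v(1)] card_component_le_largest_comp[OF assms(1) v(1)] .
    ultimately have "Suc t \<le> card (S \<union> ?C)" "card (S \<union> ?C) < Suc t + largest_comp V F"
      using False S(3) by linarith+
    moreover have "edge_closed F (S \<union> ?C)"
      by (rule edge_closed_Un[OF S(2) edge_closed_component[OF assms(1,2)]])
    moreover have "S \<union> ?C \<subseteq> V" using S(1) component_subset[of V F v] by (rule Un_least)
    ultimately show ?thesis by blast
  qed
qed

lemma edge_closed_balanced:
  assumes "graph V E" "F \<subseteq> E" "edge_closed F S" "S \<subseteq> V"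
    and "a \<le> real (card S)" "real (card S) \<le> real (card V) - a"
  obtains T where "T \<subseteq> V" "edge_closed F T" "a \<le> real (card T)" "real (card T) \<le> real (card V) / 2"
proof (cases "real (card S) \<le> real (card V) / 2")
  case True
  then show ?thesis using assms(3-5) by (intro that[of S])
next
  case False
  have "real (card (V - S)) = real (card V) - real (card S)"
    using card_Diff_subset[OF finite_subset[OF assms(4) graph_finite_vertices[OF assms(1)]] assms(4)]
      card_mono[OF graph_finite_vertices[OF assms(1)] assms(4)] by (simp add: of_nat_diff)
  then show ?thesis
    using False assms(6) by (intro that[of "V - S"] edge_closed_Diff[OF assms(1-3)]) auto
qed

text \<open>The set T is the largest cluster, a greedy union of clusters, or the complement of one of these.\<close>
lemma exists_balanced_edge_closed:
  assumes "graph V E" "F \<subseteq> E" "0 < c" "4 \<le> card V"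
    and "real (largest_comp V F) < c * real (card V)"
  obtains T where "T \<subseteq> V" "edge_closed F T"
    "min (1/4) (1 - c) * real (card V) \<le> real (card T)" "real (card T) \<le> real (card V) / 2"
proof -
  let ?N = "real (card V)" and ?\<kappa> = "min (1/4) (1 - c)"
  have V: "V \<noteq> {}" using assms(4) by auto
  have \<kappa>: "?\<kappa> * ?N \<le> ?N / 4" "?\<kappa> * ?N \<le> (1 - c) * ?N"
    using assms(4) by (simp_all add: min_def)
  show ?thesis
  proof (cases "?N / 4 \<le> real (largest_comp V F)")
    case True
    obtain v where v: "v \<in> V" "card (component V F v) = largest_comp V F"
      using largest_comp_attained[OF assms(1) V] .
    have "?\<kappa> * ?N \<le> real (card (component V F v))" using \<kappa>(1) True v(2) by linarith
    moreover have "real (card (component V F v)) \<le> ?N - ?\<kappa> * ?N"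
      using \<kappa>(2) assms(5) v(2) by (simp add: algebra_simps)
    ultimately show ?thesis
      by (rule edge_closed_balanced[OF assms(1,2) edge_closed_component[OF assms(1,2)] component_subset])
        (rule that)
  next
    case False
    define t where "t = nat \<lceil>?N / 4\<rceil>"
    have t: "?N / 4 \<le> real t" "real t \<le> ?N / 4 + 1"
      unfolding t_def using of_int_ceiling_le_add_one[of "?N / 4"] by simp_all
    then have "t \<le> card V" using assms(4) by linarith
    then obtain S where S: "S \<subseteq> V" "edge_closed F S" "t \<le> card S" "card S < t + largest_comp V F"
      using exists_edge_closed_card_between[OF assms(1,2) V] by blast
    have "?N / 4 \<le> real (card S)" "real (card S) \<le> ?N - ?N / 4"
      using S(3,4) t False assms(4) by linarith+
    then have "?\<kappa> * ?N \<le> real (card S)" "real (card S) \<le> ?N - ?\<kappa> * ?N"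
      using \<kappa>(1) by linarith+
    then show ?thesis by (rule edge_closed_balanced[OF assms(1,2) S(2,1)]) (rule that)
  qed
qed

section \<open>Expansion\<close>

lemma edges_between_commute: "edges_between E A B = edges_between E B A"
  unfolding edges_between_def by (auto simp: insert_commute)

lemma cheeger_less_boundary:
  assumes "graph V E" "b < cheeger V E" "A \<subseteq> V" "0 < card A" "real (card A) \<le> real (card V) / 2"
  shows "b * card A < card (edges_between E A (V - A))"
proof -
  let ?ratio = "\<lambda>A. real (card (edges_between E A (V - A))) / real (card A)"
  have "finite {?ratio A | A. A \<subseteq> V \<and> 0 < card A \<and> real (card A) \<le> real (card V) / 2}"
    using graph_finite_vertices[OF assms(1)] by simp
  then have "cheeger V E \<le> ?ratio A"
    unfolding cheeger_def by (rule Min_le) (use assms in blast)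
  then have "b < ?ratio A" using assms(2) by linarith
  then show ?thesis using assms(4) by (simp add: pos_less_divide_eq)
qed

lemma cheeger_less_boundary_min:
  assumes "graph V E" "b < cheeger V E" "0 \<le> b" "S \<subseteq> V" "S \<noteq> {}" "S \<noteq> V"
  shows "b * min (real (card S)) (real (card V) - real (card S)) < card (edges_between E S (V - S))"
proof -
  have fin: "finite V" using graph_finite_vertices[OF assms(1)] .
  have "card (V - S) = card V - card S"
    using card_Diff_subset[OF finite_subset[OF assms(4) fin] assms(4)] .
  then have card_compl: "real (card (V - S)) = real (card V) - real (card S)"
    using card_mono[OF fin assms(4)] by (simp add: of_nat_diff)
  show ?thesis
  proof (cases "real (card S) \<le> real (card V) / 2")
    case True
    have "0 < card S" using assms(5) finite_subset[OF assms(4) fin] by (simp add: card_gt_0_iff)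
    then have "b * card S < card (edges_between E S (V - S))"
      using cheeger_less_boundary[OF assms(1,2,4)] True by blast
    moreover have "b * min (real (card S)) (real (card V) - real (card S)) \<le> b * card S"
      using assms(3) by (simp add: mult_left_mono)
    ultimately show ?thesis by linarith
  next
    case False
    have "V - S \<noteq> {}" using assms(4,6) by blast
    then have "0 < card (V - S)" using fin by (simp add: card_gt_0_iff)
    moreover have "real (card (V - S)) \<le> real (card V) / 2" using False card_compl by simp
    ultimately have "b * card (V - S) < card (edges_between E (V - S) (V - (V - S)))"
      using cheeger_less_boundary[OF assms(1,2) Diff_subset] by blast
    also have "V - (V - S) = S" using assms(4) by blast
    also have "edges_between E (V - S) S = edges_between E S (V - S)"
      by (rule edges_between_commute)
    finally have "b * card (V - S) < card (edges_between E S (V - S))" .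
    moreover have "b * min (real (card S)) (real (card V) - real (card S)) \<le> b * card (V - S)"
      using assms(3) card_compl by (simp add: mult_left_mono)
    ultimately show ?thesis by linarith
  qed
qed

lemma perc_prob_closed_cut_le:
  assumes "graph V E" "b < cheeger V E" "0 \<le> b" "0 \<le> p" "p < 1" "T \<subseteq> V" "0 < k"
    and "k \<le> real (card T)" "real (card T) \<le> real (card V) / 2"
  shows "perc_prob E p (\<lambda>F. F \<inter> edges_between E T (V - T) = {}) \<le> (1 - p) powr (b * k)"
proof -
  let ?B = "edges_between E T (V - T)"
  have "0 < card T" using assms(7,8) by linarith
  have "b * k \<le> b * card T" using assms(3,8) by (simp add: mult_left_mono)
  then have "b * k \<le> real (card ?B)"
    using cheeger_less_boundary[OF assms(1,2,6) \<open>0 < card T\<close> assms(9)] by simp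
  moreover have "perc_prob E p (\<lambda>F. F \<inter> ?B = {}) = (1 - p) ^ card ?B"
    using perc_prob_avoid[OF graph_finite_edges[OF assms(1)]] by (simp add: edges_between_def)
  ultimately show ?thesis using assms(4,5) by (simp add: powr_realpow[symmetric] powr_mono')
qed

lemma largest_comp_all_edges:
  assumes "graph V E" "0 < cheeger V E" "V \<noteq> {}"
  shows "largest_comp V E = card V"
proof -
  obtain v where v: "v \<in> V" using assms(3) by blast
  have "component V E v = V"
  proof (rule ccontr)
    assume ne: "component V E v \<noteq> V"
    have "edges_between E (component V E v) (V - component V E v) = {}"
      using edge_closed_disjoint_boundary[OF edge_closed_component[OF assms(1) order_refl]]
      unfolding edges_between_def by blast
    then show False
      using cheeger_less_boundary_min[OF assms(1,2) order_refl component_subset _ ne]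
        in_component_self[OF v] by auto
  qed
  then have "card V \<le> largest_comp V E" using card_component_le_largest_comp[OF assms(1) v, of E] by simp
  then show ?thesis using largest_comp_le_card[OF assms(1), of E] by simp
qed

lemma largest_comp_insert_boundary_edge:
  assumes "graph V E" "v \<in> V" "e \<in> edges_between E (component V F v) (V - component V F v)"
  shows "card (component V F v) + 1 \<le> largest_comp V (insert e F)"
proof -
  let ?C = "component V F v"
  obtain x y where xy: "e = {x, y}" "x \<in> ?C" "y \<in> V - ?C"
    using assms(3) unfolding edges_between_def by blast
  have "connected_in F v x" using xy(2) unfolding component_def by simp
  then have "connected_in (insert e F) v x" by (rule connected_in_mono[OF subset_insertI])
  then have "connected_in (insert e F) v y" by (rule connected_in_step) (simp add: xy(1))
  then have "y \<in> component V (insert e F) v" using xy(3) unfolding component_def by simp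
  moreover have "?C \<subseteq> component V (insert e F) v" by (rule component_mono[OF subset_insertI])
  ultimately have "insert y ?C \<subseteq> component V (insert e F) v" by blast
  then have "card (insert y ?C) \<le> card (component V (insert e F) v)"
    using finite_component[OF assms(1)] by (rule card_mono[rotated])
  moreover have "card (insert y ?C) = card ?C + 1" using xy(3) finite_component[OF assms(1)] by simp
  ultimately show ?thesis using card_component_le_largest_comp[OF assms(1,2), of "insert e F"] by simp
qed

lemma influence_sum_largest_comp_ge:
  assumes "graph V E" "b < cheeger V E" "0 \<le> b" "V \<noteq> {}" "F \<subseteq> E"
  shows "b * min (real (largest_comp V F)) (real (card V) - real (largest_comp V F))
         \<le> influence_sum E (\<lambda>F. real (largest_comp V F)) F"
proof -
  let ?g = "\<lambda>e. real (largest_comp V (insert e F)) - real (largest_comp V (F - {e}))"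
  have g_nonneg: "0 \<le> ?g e" for e
    using largest_comp_mono[OF assms(1), of "F - {e}" "insert e F"] by auto
  obtain v where v: "v \<in> V" "card (component V F v) = largest_comp V F"
    using largest_comp_attained[OF assms(1,4)] .
  let ?C = "component V F v"
  show ?thesis
  proof (cases "?C = V")
    case True
    then show ?thesis using v(2) g_nonneg by (simp add: sum_nonneg influence_sum_def)
  next
    case False
    let ?B = "edges_between E ?C (V - ?C)"
    have "?B \<subseteq> E" unfolding edges_between_def by blast
    have "1 \<le> ?g e" if "e \<in> ?B" for e
    proof -
      have "e \<notin> F"
        using that edge_closed_disjoint_boundary[OF edge_closed_component[OF assms(1,5)]] by blast
      then show ?thesis
        using largest_comp_insert_boundary_edge[OF assms(1) v(1) that] v(2) by simp
    qed
    then have "real (card ?B) \<le> (\<Sum>e\<in>?B. ?g e)"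
      using sum_mono[of ?B "\<lambda>_. 1" ?g] by simp
    also have "\<dots> \<le> (\<Sum>e\<in>E. ?g e)"
      using graph_finite_edges[OF assms(1)] \<open>?B \<subseteq> E\<close> g_nonneg by (intro sum_mono2) auto
    finally have B_le: "real (card ?B) \<le> (\<Sum>e\<in>E. ?g e)" .
    have "?C \<noteq> {}" using in_component_self[OF v(1)] by blast
    then have "b * min (real (card ?C)) (real (card V) - real (card ?C)) < card ?B"
      by (rule cheeger_less_boundary_min[OF assms(1-3) component_subset _ False])
    then show ?thesis using B_le unfolding v(2) influence_sum_def by linarith
  qed
qed

section \<open>Isolated vertices\<close>

definition isolated :: "'a set \<Rightarrow> 'a set set \<Rightarrow> 'a set set \<Rightarrow> 'a set" where
  "isolated V E F = {v\<in>V. F \<inter> {e\<in>E. v \<in> e} = {}}"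

lemma card_isolated_le:
  assumes "graph V E" "F \<subseteq> E" "V \<noteq> {}"
  shows "real (card (isolated V E F)) \<le> real (card V) - real (largest_comp V F) + 1"
proof -
  obtain v where v: "v \<in> V" "card (component V F v) = largest_comp V F"
    using largest_comp_attained[OF assms(1,3)] .
  let ?C = "component V F v"
  have "isolated V E F \<subseteq> insert v (V - ?C)"
  proof
    fix w assume w: "w \<in> isolated V E F"
    show "w \<in> insert v (V - ?C)"
    proof (cases "w \<in> ?C")
      case True
      then have "(\<lambda>u v. {u, v} \<in> F)\<^sup>*\<^sup>* v w" unfolding component_def connected_in_def by simp
      then have "w = v"
      proof (cases rule: rtranclp.cases)
        case (rtrancl_into_rtrancl y)
        then have "{y, w} \<in> F \<inter> {e\<in>E. w \<in> e}" using assms(2) by blast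
        then show ?thesis using w unfolding isolated_def by blast
      qed simp
      then show ?thesis by simp
    qed (use w in \<open>simp add: isolated_def\<close>)
  qed
  then have "card (isolated V E F) \<le> card (insert v (V - ?C))"
    using graph_finite_vertices[OF assms(1)] by (intro card_mono) auto
  also have "\<dots> \<le> card (V - ?C) + 1"
    using graph_finite_vertices[OF assms(1)] by (simp add: card_insert_if)
  finally have "card (isolated V E F) \<le> card (V - ?C) + 1" .
  moreover have "card (V - ?C) = card V - largest_comp V F"
    using card_Diff_subset[OF finite_component[OF assms(1)] component_subset] v(2) by simp
  ultimately show ?thesis using largest_comp_le_card[OF assms(1), of F] by (simp add: of_nat_diff)
qed

lemma card_isolated_eq_sum:
  assumes "finite V"
  shows "real (card (isolated V E F)) = (\<Sum>v\<in>V. of_bool (F \<inter> {e\<in>E. v \<in> e} = {}))"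
  unfolding isolated_def using assms by (simp add: Int_def)

lemma perc_expect_card_isolated:
  assumes "graph V E"
  shows "perc_expect E p (\<lambda>F. real (card (isolated V E F))) = (\<Sum>v\<in>V. (1 - p) ^ degree E v)"
  unfolding card_isolated_eq_sum[OF graph_finite_vertices[OF assms]] perc_expect_sum degree_def
  by (intro sum.cong refl perc_prob_avoid[unfolded perc_prob_eq_expect] graph_finite_edges[OF assms]) blast

lemma perc_expect_card_isolated_sq:
  assumes "graph V E"
  shows "perc_expect E p (\<lambda>F. (real (card (isolated V E F)))\<^sup>2) =
     (\<Sum>u\<in>V. \<Sum>v\<in>V. (1 - p) ^ card ({e\<in>E. u \<in> e} \<union> {e\<in>E. v \<in> e}))"
proof -
  let ?I = "\<lambda>v. {e\<in>E. v \<in> e}"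
  have "(real (card (isolated V E F)))\<^sup>2 = (\<Sum>u\<in>V. \<Sum>v\<in>V. of_bool (F \<inter> (?I u \<union> ?I v) = {}))" for F
    unfolding card_isolated_eq_sum[OF graph_finite_vertices[OF assms]] power2_eq_square sum_product
    by (intro sum.cong refl) (auto simp: Int_Un_distrib)
  then have "perc_expect E p (\<lambda>F. (real (card (isolated V E F)))\<^sup>2)
      = (\<Sum>u\<in>V. \<Sum>v\<in>V. perc_expect E p (\<lambda>F. of_bool (F \<inter> (?I u \<union> ?I v) = {})))"
    by (simp only: perc_expect_sum)
  also have "\<dots> = (\<Sum>u\<in>V. \<Sum>v\<in>V. (1 - p) ^ card (?I u \<union> ?I v))"
    by (intro sum.cong refl perc_prob_avoid[unfolded perc_prob_eq_expect] graph_finite_edges[OF assms]) blast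
  finally show ?thesis .
qed

lemma card_vertices_sharing_edge_le:
  assumes "graph V E"
  shows "card {v\<in>V. {e\<in>E. u \<in> e} \<inter> {e\<in>E. v \<in> e} \<noteq> {}} \<le> 2 * degree E u"
proof -
  let ?I = "{e\<in>E. u \<in> e}"
  have "finite ?I" using graph_finite_edges[OF assms] by simp
  have "finite e" if "e \<in> ?I" for e
    using that graph_edge_subset[OF assms] graph_finite_vertices[OF assms] finite_subset by blast
  then have "card {v\<in>V. ?I \<inter> {e\<in>E. v \<in> e} \<noteq> {}} \<le> card (\<Union>?I)"
    using \<open>finite ?I\<close> by (intro card_mono) auto
  also have "\<dots> \<le> (\<Sum>e\<in>?I. card e)" by (rule card_Union_le_sum_card)
  also have "\<dots> = 2 * card ?I" using assms unfolding graph_def by simp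
  finally show ?thesis unfolding degree_def .
qed

lemma perc_variance_card_isolated_le:
  assumes "graph V E" "\<And>v. v \<in> V \<Longrightarrow> degree E v \<le> d" "0 \<le> p" "p \<le> 1"
  shows "perc_expect E p (\<lambda>F. (real (card (isolated V E F)))\<^sup>2)
           - (perc_expect E p (\<lambda>F. real (card (isolated V E F))))\<^sup>2 \<le> 2 * real d * real (card V)"
proof -
  let ?I = "\<lambda>v. {e\<in>E. v \<in> e}" and ?q = "1 - p"
  have "perc_expect E p (\<lambda>F. (real (card (isolated V E F)))\<^sup>2)
          - (perc_expect E p (\<lambda>F. real (card (isolated V E F))))\<^sup>2
      = (\<Sum>u\<in>V. \<Sum>v\<in>V. ?q ^ card (?I u \<union> ?I v) - ?q ^ card (?I u) * ?q ^ card (?I v))"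
    unfolding perc_expect_card_isolated_sq[OF assms(1)] perc_expect_card_isolated[OF assms(1)]
    unfolding power2_eq_square sum_product degree_def by (simp add: sum_subtractf)
  also have "\<dots> \<le> (\<Sum>u\<in>V. \<Sum>v\<in>V. of_bool (?I u \<inter> ?I v \<noteq> {}))"
  proof (intro sum_mono)
    fix u v
    show "?q ^ card (?I u \<union> ?I v) - ?q ^ card (?I u) * ?q ^ card (?I v) \<le> of_bool (?I u \<inter> ?I v \<noteq> {})"
    proof (cases "?I u \<inter> ?I v = {}")
      case True
      then have "card (?I u \<union> ?I v) = card (?I u) + card (?I v)"
        using graph_finite_edges[OF assms(1)] by (simp add: card_Un_disjoint)
      then show ?thesis using True by (simp add: power_add)
    next
      case False
      have "?q ^ card (?I u \<union> ?I v) \<le> 1" using assms(3,4) by (simp add: power_le_one)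
      moreover have "0 \<le> ?q ^ card (?I u) * ?q ^ card (?I v)" using assms(4) by simp
      ultimately show ?thesis using False by simp
    qed
  qed
  also have "\<dots> \<le> (\<Sum>u\<in>V. 2 * real d)"
  proof (rule sum_mono)
    fix u assume "u \<in> V"
    have "(\<Sum>v\<in>V. of_bool (?I u \<inter> ?I v \<noteq> {})) = real (card {v\<in>V. ?I u \<inter> ?I v \<noteq> {}})"
      using graph_finite_vertices[OF assms(1)] by (simp add: Int_def)
    also have "\<dots> \<le> 2 * real d"
      using card_vertices_sharing_edge_le[OF assms(1), of u] assms(2)[OF \<open>u \<in> V\<close>] by linarith
    finally show "(\<Sum>v\<in>V. of_bool (?I u \<inter> ?I v \<noteq> {})) \<le> 2 * real d" .
  qed
  finally show ?thesis by (simp add: mult.commute)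
qed

lemma perc_prob_few_isolated_le:
  fixes \<eta> :: real
  assumes "graph V E" "\<And>v. v \<in> V \<Longrightarrow> degree E v \<le> d" "V \<noteq> {}"
    and "0 \<le> p" "0 < \<eta>" "\<eta> \<le> 1 - p"
  shows "perc_prob E p (\<lambda>F. real (card (isolated V E F)) < \<eta> ^ d * card V / 2)
           \<le> 8 * real d / (\<eta> ^ (2 * d) * card V)"
proof -
  define X where "X F = real (card (isolated V E F))" for F
  define \<mu> where "\<mu> = perc_expect E p X"
  have p1: "p \<le> 1" using assms(5,6) by simp
  have N: "0 < real (card V)" using assms(3) graph_finite_vertices[OF assms(1)] by (simp add: card_gt_0_iff)
  have "(\<Sum>v\<in>V. \<eta> ^ d) \<le> (\<Sum>v\<in>V. (1 - p) ^ degree E v)"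
  proof (rule sum_mono)
    fix v assume "v \<in> V"
    have "\<eta> ^ d \<le> (1 - p) ^ d" using assms(5,6) by (intro power_mono) auto
    also have "\<dots> \<le> (1 - p) ^ degree E v" using assms(2)[OF \<open>v \<in> V\<close>] assms(4-6) by (intro power_decreasing) auto
    finally show "\<eta> ^ d \<le> (1 - p) ^ degree E v" .
  qed
  then have \<mu>_ge: "\<eta> ^ d * card V \<le> \<mu>"
    unfolding \<mu>_def X_def perc_expect_card_isolated[OF assms(1)] by (simp add: mult.commute)
  have \<eta>d: "0 < \<eta> ^ d * card V" using assms(5) N by simp
  then have "0 < \<mu>" using \<mu>_ge by linarith
  have "perc_prob E p (\<lambda>F. X F < \<eta> ^ d * card V / 2) \<le> perc_prob E p (\<lambda>F. X F < \<mu> / 2)"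
    using \<mu>_ge by (intro perc_prob_mono_event[OF assms(4) p1]) simp
  also have "\<dots> \<le> 2 * real d * card V / (\<mu> / 2)\<^sup>2"
  proof -
    have "(\<mu> / 2)\<^sup>2 * perc_prob E p (\<lambda>F. X F < \<mu> / 2) \<le> perc_expect E p (\<lambda>F. (X F)\<^sup>2) - \<mu>\<^sup>2"
      using chebyshev_lower_tail[OF graph_finite_edges[OF assms(1)] assms(4) p1] \<open>0 < \<mu>\<close>
      unfolding \<mu>_def by blast
    also have "\<dots> \<le> 2 * real d * card V"
      unfolding \<mu>_def X_def by (rule perc_variance_card_isolated_le[OF assms(1,2,4) p1])
    finally show ?thesis using \<open>0 < \<mu>\<close> by (simp add: field_simps)
  qed
  also have "\<dots> \<le> 2 * real d * card V / (\<eta> ^ d * card V / 2)\<^sup>2"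
    using \<mu>_ge \<eta>d by (intro divide_left_mono power_mono mult_pos_pos zero_less_power) auto
  also have "\<dots> = 8 * real d / (\<eta> ^ (2 * d) * card V)"
    using N assms(5) by (simp add: field_simps power2_eq_square power_mult)
  finally show ?thesis unfolding X_def .
qed

section \<open>The giant cluster in the critical window\<close>

definition has_giant :: "'a set \<Rightarrow> real \<Rightarrow> 'a set set \<Rightarrow> bool" where
  "has_giant V c F \<longleftrightarrow> c * real (card V) \<le> real (largest_comp V F)"

lemma increasing_has_giant:
  assumes "graph V E" shows "increasing_event E (has_giant V c)"
  unfolding increasing_event_def has_giant_def
proof (intro allI impI)
  fix F G assume "F \<subseteq> G" "c * real (card V) \<le> real (largest_comp V F)"
  then show "c * real (card V) \<le> real (largest_comp V G)"
    using largest_comp_mono[OF assms \<open>F \<subseteq> G\<close>] by linarith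
qed

lemma perc_prob_no_giant_le:
  assumes "graph V E" "b < cheeger V E" "0 < b" "0 < c" "c < 1" "4 \<le> card V" "0 \<le> p" "p < 1"
  shows "perc_prob E p (\<lambda>F. \<not> has_giant V c F)
           \<le> 2 ^ card V * (1 - p) powr (b * min (1/4) (1 - c) * real (card V))"
proof -
  let ?N = "real (card V)" and ?\<kappa> = "min (1/4) (1 - c)"
  define \<T> where "\<T> = {T\<in>Pow V. ?\<kappa> * ?N \<le> real (card T) \<and> real (card T) \<le> ?N / 2}"
  let ?closed = "\<lambda>T F. F \<inter> edges_between E T (V - T) = {}"
  have fin: "finite V" using graph_finite_vertices[OF assms(1)] .
  have "perc_prob E p (\<lambda>F. \<not> has_giant V c F) \<le> (\<Sum>T\<in>\<T>. perc_prob E p (?closed T))"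
  proof (rule perc_prob_union_bound)
    fix F assume "F \<subseteq> E" "\<not> has_giant V c F"
    then have "real (largest_comp V F) < c * ?N" unfolding has_giant_def by simp
    then obtain T where "T \<subseteq> V" "edge_closed F T" "?\<kappa> * ?N \<le> real (card T)" "real (card T) \<le> ?N / 2"
      by (rule exists_balanced_edge_closed[OF assms(1) \<open>F \<subseteq> E\<close> assms(4,6)])
    then show "\<exists>T\<in>\<T>. ?closed T F" unfolding \<T>_def using edge_closed_disjoint_boundary by blast
  qed (use assms(7,8) fin in \<open>simp_all add: \<T>_def\<close>)
  also have "\<dots> \<le> (\<Sum>T\<in>\<T>. (1 - p) powr (b * (?\<kappa> * ?N)))"
    using assms(3,5,6,7,8)
    by (intro sum_mono perc_prob_closed_cut_le[OF assms(1,2)]) (auto simp: \<T>_def)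
  also have "\<dots> \<le> 2 ^ card V * (1 - p) powr (b * ?\<kappa> * ?N)"
  proof -
    have "card \<T> \<le> card (Pow V)" unfolding \<T>_def using fin by (intro card_mono) auto
    then have "real (card \<T>) \<le> 2 ^ card V" using fin by (simp add: card_Pow)
    then show ?thesis by (simp add: mult_right_mono mult.assoc)
  qed
  finally show ?thesis .
qed

lemma p_crit_threshold:
  fixes c :: real
  assumes "graph V E" "0 < cheeger V E" "V \<noteq> {}" "1 < c * card V" "c \<le> 1" "0 < a" "a < 1"
  shows "0 \<le> p_crit V E a c \<and> p_crit V E a c \<le> 1 \<and> perc_prob E (p_crit V E a c) (has_giant V c) = a"
proof -
  have giant_eq: "(\<lambda>F. c * real (card V) \<le> real (largest_comp V F)) = has_giant V c"
    by (simp add: has_giant_def fun_eq_iff)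
  have "\<not> has_giant V c {}"
    using largest_comp_empty[OF assms(1,3)] assms(4) unfolding has_giant_def by simp
  moreover have "has_giant V c E"
    using largest_comp_all_edges[OF assms(1-3)] mult_right_mono[OF assms(5), of "real (card V)"]
    unfolding has_giant_def by simp
  ultimately show ?thesis
    unfolding p_crit_def giant_eq
    by (rule perc_prob_threshold[OF graph_finite_edges[OF assms(1)] increasing_has_giant[OF assms(1)] _ _ assms(6,7)])
qed

lemma perc_prob_has_giant_between:
  fixes c :: real
  assumes "graph V E" "0 < cheeger V E" "V \<noteq> {}" "1 < c * card V" "c \<le> 1" "0 < \<alpha>" "\<alpha> < 1/2"
    and "p \<in> {p_crit V E \<alpha> c .. p_crit V E (1 - \<alpha>) c}"
  shows "0 \<le> p" "p \<le> 1" "\<alpha> \<le> perc_prob E p (has_giant V c)" "perc_prob E p (has_giant V c) \<le> 1 - \<alpha>"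
proof -
  note lo = p_crit_threshold[OF assms(1-5), of \<alpha>] and hi = p_crit_threshold[OF assms(1-5), of "1 - \<alpha>"]
  note mono = perc_prob_mono_increasing[OF graph_finite_edges[OF assms(1)] increasing_has_giant[OF assms(1), of c]]
  show "0 \<le> p" "p \<le> 1" using assms(6-8) lo hi by auto
  then show "\<alpha> \<le> perc_prob E p (has_giant V c)" "perc_prob E p (has_giant V c) \<le> 1 - \<alpha>"
    using assms(6-8) lo hi mono[of "p_crit V E \<alpha> c" p] mono[of p "p_crit V E (1 - \<alpha>) c"] by auto
qed

lemma less_one_minus_if_perc_prob_has_giant_le:
  assumes "graph V E" "b < cheeger V E" "0 < b" "0 < c" "c < 1" "4 \<le> card V" "0 < \<eta>" "\<eta> < 1"
    and "0 \<le> p" "p \<le> 1" "perc_prob E p (has_giant V c) \<le> 1 - \<alpha>"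
    and "2 ^ card V * \<eta> powr (b * min (1/4) (1 - c) * real (card V)) < \<alpha>"
  shows "p < 1 - \<eta>"
proof (rule ccontr)
  assume "\<not> p < 1 - \<eta>"
  have fin: "finite E" using graph_finite_edges[OF assms(1)] .
  have "perc_prob E (1 - \<eta>) (\<lambda>F. \<not> has_giant V c F) < \<alpha>"
    using perc_prob_no_giant_le[OF assms(1-6), of "1 - \<eta>"] assms(7,8,12) by simp
  then have "1 - \<alpha> < perc_prob E (1 - \<eta>) (has_giant V c)" unfolding perc_prob_not[OF fin] by simp
  also have "\<dots> \<le> perc_prob E p (has_giant V c)"
    using \<open>\<not> p < 1 - \<eta>\<close> assms(8,10)
    by (intro perc_prob_mono_increasing[OF fin increasing_has_giant[OF assms(1)]]) auto
  finally show False using assms(11) by simp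
qed

lemma min_largest_comp_ge:
  fixes \<eta> :: real
  assumes "graph V E" "F \<subseteq> E" "V \<noteq> {}" "has_giant V c F"
    and "\<eta> ^ d * card V / 2 \<le> real (card (isolated V E F))" "4 \<le> \<eta> ^ d * card V"
  shows "min c (\<eta> ^ d / 4) * card V \<le> min (real (largest_comp V F)) (card V - real (largest_comp V F))"
proof -
  have "min c (\<eta> ^ d / 4) * card V \<le> c * card V" "min c (\<eta> ^ d / 4) * card V \<le> \<eta> ^ d / 4 * card V"
    by (intro mult_right_mono; simp)+
  moreover have "c * card V \<le> real (largest_comp V F)" using assms(4) unfolding has_giant_def .
  moreover have "\<eta> ^ d / 4 * card V \<le> card V - real (largest_comp V F)"
    using card_isolated_le[OF assms(1-3)] assms(5,6) by linarith
  ultimately show ?thesis by simp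
qed

lemma deriv_perc_expect_largest_comp_ge:
  assumes "graph V E" "b < cheeger V E" "0 \<le> b" "V \<noteq> {}" "0 \<le> p" "p \<le> 1"
  shows "b * perc_expect E p (\<lambda>F. min (real (largest_comp V F)) (card V - real (largest_comp V F)))
           \<le> deriv (\<lambda>q. perc_expect E q (\<lambda>F. real (largest_comp V F))) p"
proof -
  have "deriv (\<lambda>q. perc_expect E q (\<lambda>F. real (largest_comp V F))) p
      = perc_expect E p (influence_sum E (\<lambda>F. real (largest_comp V F)))"
    by (rule DERIV_imp_deriv[OF russo_formula[OF graph_finite_edges[OF assms(1)]]])
  moreover have "b * perc_expect E p (\<lambda>F. min (real (largest_comp V F)) (card V - real (largest_comp V F)))
      \<le> perc_expect E p (influence_sum E (\<lambda>F. real (largest_comp V F)))"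
    unfolding perc_expect_cmult[symmetric]
    by (rule perc_expect_mono[OF assms(5,6) influence_sum_largest_comp_ge[OF assms(1-4)]])
  ultimately show ?thesis by simp
qed

lemma deriv_largest_comp_lower_bound:
  fixes b c \<alpha> \<eta> :: real
  assumes "graph V E" "b < cheeger V E" "0 < b" "\<And>v. v \<in> V \<Longrightarrow> degree E v \<le> d"
    and "0 < \<alpha>" "\<alpha> < 1/2" "0 < c" "c < 1" "0 < \<eta>" "\<eta> < 1"
    and "4 \<le> card V" "1 < c * card V" "4 \<le> \<eta> ^ d * card V" "16 * real d \<le> \<alpha> * \<eta> ^ (2 * d) * card V"
    and "2 ^ card V * \<eta> powr (b * min (1/4) (1 - c) * card V) < \<alpha>"
    and "p \<in> {p_crit V E \<alpha> c .. p_crit V E (1 - \<alpha>) c}"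
  shows "b * \<alpha> * min c (\<eta> ^ d / 4) / 2 * card V
           \<le> deriv (\<lambda>q. perc_expect E q (\<lambda>F. real (largest_comp V F))) p"
proof -
  let ?few_isolated = "\<lambda>F. real (card (isolated V E F)) < \<eta> ^ d * card V / 2"
  let ?M = "min c (\<eta> ^ d / 4) * card V"
  have V: "V \<noteq> {}" using assms(11) by auto
  have cheeger: "0 < cheeger V E" using assms(2,3) by linarith
  note window = perc_prob_has_giant_between[OF assms(1) cheeger V assms(12) less_imp_le[OF assms(8)] assms(5,6,16)]
  have "p < 1 - \<eta>"
    using less_one_minus_if_perc_prob_has_giant_le[OF assms(1-3,7,8,11,9,10) window(1,2,4) assms(15)]
    by simp
  then have "perc_prob E p ?few_isolated \<le> 8 * real d / (\<eta> ^ (2 * d) * card V)"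
    using perc_prob_few_isolated_le[OF assms(1,4) V window(1) assms(9)] by simp
  also have "\<dots> \<le> \<alpha> / 2"
    using assms(9,11,14) by (simp add: divide_le_eq field_simps)
  finally have "?M * (\<alpha> / 2) \<le> ?M * (perc_prob E p (has_giant V c) - perc_prob E p ?few_isolated)"
    using window(3) assms(7,9) by (intro mult_left_mono) auto
  also have "\<dots> \<le> perc_expect E p (\<lambda>F. min (real (largest_comp V F)) (card V - real (largest_comp V F)))"
    using window(1,2) assms(7,9) min_largest_comp_ge[OF assms(1) _ V _ _ assms(13)]
      largest_comp_le_card[OF assms(1)]
    by (intro perc_expect_ge_prob_diff) auto
  finally have "b * (?M * (\<alpha> / 2)) \<le> b * perc_expect E p (\<lambda>F. min (real (largest_comp V F)) (card V - real (largest_comp V F)))"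
    using assms(3) by (intro mult_left_mono) auto
  also have "\<dots> \<le> deriv (\<lambda>q. perc_expect E q (\<lambda>F. real (largest_comp V F))) p"
    using deriv_perc_expect_largest_comp_ge[OF assms(1,2) _ V window(1,2)] assms(3) by simp
  finally show ?thesis by (simp add: algebra_simps)
qed

section \<open>Large expanders\<close>

lemma eventually_le_mult_real_sequentially:
  fixes a K :: real
  assumes "0 < a"
  shows "eventually (\<lambda>n. K \<le> a * real n) sequentially"
proof -
  have "eventually (\<lambda>n. K / a \<le> real n) sequentially"
    using filterlim_real_sequentially by (simp add: filterlim_at_top)
  then show ?thesis by eventually_elim (use assms in \<open>simp add: divide_le_eq mult.commute\<close>)
qed

lemma eventually_large_graph_conditions:
  fixes b c \<alpha> \<eta> :: real
  assumes "0 < \<alpha>" "0 < c" "0 < \<eta>" "\<eta> powr (b * min (1/4) (1 - c)) = 1/4"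
  shows "eventually (\<lambda>n. 4 \<le> n \<and> 1 < c * n \<and> 4 \<le> \<eta> ^ d * n \<and> 16 * real d \<le> \<alpha> * \<eta> ^ (2 * d) * n
           \<and> 2 ^ n * \<eta> powr (b * min (1/4) (1 - c) * n) < \<alpha>) sequentially"
proof -
  have pow: "2 ^ n * \<eta> powr (b * min (1/4) (1 - c) * n) = (1/2) ^ n" for n :: nat
  proof -
    have "\<eta> powr (b * min (1/4) (1 - c) * n) = (1/4) powr real n"
      using powr_powr[of \<eta> "b * min (1/4) (1 - c)" "real n"] assms(4) by simp
    also have "\<dots> = (1/4) ^ n" by (simp add: powr_realpow)
    finally show ?thesis by (simp add: power_mult_distrib[symmetric])
  qed
  have "eventually (\<lambda>n. (1/2 :: real) ^ n < \<alpha>) sequentially"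
    using order_tendstoD(2)[OF LIMSEQ_power_zero assms(1)] by simp
  moreover have "eventually (\<lambda>n. 2 \<le> c * real n) sequentially"
    using assms(2) by (rule eventually_le_mult_real_sequentially)
  moreover have "eventually (\<lambda>n. 4 \<le> \<eta> ^ d * real n) sequentially"
    using assms(3) by (intro eventually_le_mult_real_sequentially) simp
  moreover have "eventually (\<lambda>n. 16 * real d \<le> \<alpha> * \<eta> ^ (2 * d) * real n) sequentially"
    using assms(1,3) by (intro eventually_le_mult_real_sequentially) simp
  ultimately show ?thesis
    using eventually_ge_at_top[of 4] by eventually_elim (auto simp: pow)
qed

lemma exists_powr_eq_quarter:
  fixes t :: real
  assumes "0 < t"
  obtains \<eta> :: real where "0 < \<eta>" "\<eta> < 1" "\<eta> powr t = 1/4"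
proof
  show "0 < (1/4::real) powr (1/t)" by simp
  show "(1/4::real) powr (1/t) < 1"
    using powr_less_mono2[of "1/t" "1/4" 1] assms by simp
  show "((1/4::real) powr (1/t)) powr t = 1/4" using assms by (simp add: powr_powr)
qed

theorem lemma4p6:
  fixes b :: real and d :: nat and \<alpha> c :: real
  assumes "b > 0" and "d \<ge> 1" and "0 < \<alpha>" and "\<alpha> < 1/2" and "0 < c" and "c < 1"
  shows "\<exists>C' > 0. \<forall>(V :: nat \<Rightarrow> 'a set) (E :: nat \<Rightarrow> 'a set set). expander b d V E \<longrightarrow>
           (\<exists>N. \<forall>n. card (V n) \<ge> N \<longrightarrow>
              (\<forall>p \<in> {p_crit (V n) (E n) \<alpha> c .. p_crit (V n) (E n) (1 - \<alpha>) c}.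
                 deriv (\<lambda>q. perc_expect (E n) q (\<lambda>F. real (largest_comp (V n) F))) p
                   \<ge> C' * real (card (V n))))"
proof -
  \<comment> \<open>The choice of \<eta> makes \<eta>^(b min(1/4, 1 - c) N) = 4^-N, which beats the
    2^N terms of the union bound over cuts.\<close>
  have "0 < b * min (1/4) (1 - c)" using assms(1,6) by simp
  then obtain \<eta> where \<eta>: "0 < \<eta>" "\<eta> < 1" "\<eta> powr (b * min (1/4) (1 - c)) = 1/4"
    by (rule exists_powr_eq_quarter)
  obtain N0 where large: "\<forall>n\<ge>N0. 4 \<le> n \<and> 1 < c * n \<and> 4 \<le> \<eta> ^ d * n
      \<and> 16 * real d \<le> \<alpha> * \<eta> ^ (2 * d) * n \<and> 2 ^ n * \<eta> powr (b * min (1/4) (1 - c) * n) < \<alpha>"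
    using eventually_large_graph_conditions[OF assms(3,5) \<eta>(1,3), of d]
    unfolding eventually_sequentially ..
  show ?thesis
  proof (intro exI[of _ "b * \<alpha> * min c (\<eta> ^ d / 4) / 2"] exI[of _ N0] conjI allI impI ballI)
    have "0 < min c (\<eta> ^ d / 4)" using assms(5) \<eta>(1) by simp
    then show "0 < b * \<alpha> * min c (\<eta> ^ d / 4) / 2" using assms(1,3) by simp
  next
    fix V :: "nat \<Rightarrow> 'a set" and E :: "nat \<Rightarrow> 'a set set" and n p
    assume "expander b d V E" "N0 \<le> card (V n)" "p \<in> {p_crit (V n) (E n) \<alpha> c .. p_crit (V n) (E n) (1 - \<alpha>) c}"
    then show "b * \<alpha> * min c (\<eta> ^ d / 4) / 2 * real (card (V n))
        \<le> deriv (\<lambda>q. perc_expect (E n) q (\<lambda>F. real (largest_comp (V n) F))) p"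
      using large assms(1,3-6) \<eta>(1,2) unfolding expander_def
      by (intro deriv_largest_comp_lower_bound) (auto intro: order_trans[OF degree_le_max_degree])
  qed
qed

end
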